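(* Let $G=(V,E)$ be a connected graph on $n$ vertices with $\delta(G)\geq 3$ and vertex connectivity $\kappa(G)=1$ (that is, $G$ has a cut vertex). Then $F(G)\geq \lfloor (n+1)/2\rfloor$.
   Context: All graphs are finite and simple. A vertex cut of a connected graph is a set of vertices whose removal leaves a disconnected or trivial graph; $\kappa(G)$ is the minimum size of a vertex cut. Given a graph $G=(V,E)$ and a set $S\subseteq V$ of filled vertices, the color change rule is: if a filled vertex $v$ has exactly one unfilled neighbor $w$, then $w$ becomes filled. The derived set of $S$ is the set of filled vertices obtained after applying the rule until no further application is possible. $S$ is a zero forcing set if its derived set is $V$; otherwise $S$ is a failed zero forcing set. The failed zero forcing number $F(G)$ is the maximum size of a failed zero forcing set of $G$. *)

theory Defs
  imports Main
begin

definition simple_graph :: "'a set \<Rightarrow> ('a \<Rightarrow> 'a \<Rightarrow> bool) \<Rightarrow> bool" where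
  "simple_graph V E \<longleftrightarrow> finite V \<and> (\<forall>x y. E x y \<longrightarrow> x \<in> V \<and> y \<in> V)
     \<and> (\<forall>x y. E x y \<longrightarrow> E y x) \<and> (\<forall>x. \<not> E x x)"

definition nbrs :: "'a set \<Rightarrow> ('a \<Rightarrow> 'a \<Rightarrow> bool) \<Rightarrow> 'a \<Rightarrow> 'a set" where
  "nbrs V E v = {w \<in> V. E v w}"

definition min_degree_ge :: "'a set \<Rightarrow> ('a \<Rightarrow> 'a \<Rightarrow> bool) \<Rightarrow> nat \<Rightarrow> bool" where
  "min_degree_ge V E d \<longleftrightarrow> (\<forall>v\<in>V. d \<le> card (nbrs V E v))"

definition connected_on :: "'a set \<Rightarrow> ('a \<Rightarrow> 'a \<Rightarrow> bool) \<Rightarrow> bool" where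
  "connected_on U E \<longleftrightarrow> U \<noteq> {} \<and>
     (\<forall>x\<in>U. \<forall>y\<in>U. (x, y) \<in> {(a, b). a \<in> U \<and> b \<in> U \<and> E a b}\<^sup>*)"

definition vertex_cut :: "'a set \<Rightarrow> ('a \<Rightarrow> 'a \<Rightarrow> bool) \<Rightarrow> 'a set \<Rightarrow> bool" where
  "vertex_cut V E X \<longleftrightarrow> X \<subseteq> V \<and> (\<not> connected_on (V - X) E \<or> card (V - X) \<le> 1)"

definition vertex_connectivity :: "'a set \<Rightarrow> ('a \<Rightarrow> 'a \<Rightarrow> bool) \<Rightarrow> nat" where
  "vertex_connectivity V E = Min {card X | X. vertex_cut V E X}"

definition force_step :: "'a set \<Rightarrow> ('a \<Rightarrow> 'a \<Rightarrow> bool) \<Rightarrow> ('a set \<times> 'a set) set" where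
  "force_step V E = {(T, insert w T) | T w. \<exists>v\<in>T. nbrs V E v - T = {w}}"

text \<open>S is a zero forcing set iff repeated application of the color change rule
fills all of V (the derived set is unique, so this is the derived set being V).\<close>
definition zero_forcing_set :: "'a set \<Rightarrow> ('a \<Rightarrow> 'a \<Rightarrow> bool) \<Rightarrow> 'a set \<Rightarrow> bool" where
  "zero_forcing_set V E S \<longleftrightarrow> (S, V) \<in> (force_step V E)\<^sup>*"

definition failed_zero_forcing_set :: "'a set \<Rightarrow> ('a \<Rightarrow> 'a \<Rightarrow> bool) \<Rightarrow> 'a set \<Rightarrow> bool" where
  "failed_zero_forcing_set V E S \<longleftrightarrow> S \<subseteq> V \<and> \<not> zero_forcing_set V E S"

definition failed_zf_number :: "'a set \<Rightarrow> ('a \<Rightarrow> 'a \<Rightarrow> bool) \<Rightarrow> nat" where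
  "failed_zf_number V E = Max {card S | S. failed_zero_forcing_set V E S}"

end

theory Submission
  imports Defs
begin

text \<open>Removing a cut vertex v splits the rest of the graph into two sides with no edges
between them; the smaller side C has at most (n - 1)/2 vertices and its only neighbour
outside is v. A fort, i.e. a nonempty U such that no vertex outside U has exactly one
neighbour in U, can never be entered by the colour change rule, so V - U is a failed zero
forcing set. Either C itself is a fort, or v has exactly one neighbour w in C; then C - {w}
is a fort, because w has at least two neighbours in it (degree at least 3, only one of
them v). Hence F(G) \<ge> n - |C| \<ge> (n + 1)/2.\<close>

definition fort :: "'a set \<Rightarrow> ('a \<Rightarrow> 'a \<Rightarrow> bool) \<Rightarrow> 'a set \<Rightarrow> bool" where
  "fort V E U \<longleftrightarrow> U \<noteq> {} \<and> U \<subseteq> V \<and> (\<forall>u \<in> V - U. card (nbrs V E u \<inter> U) \<noteq> 1)"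

lemma force_steps_avoid_fort:
  assumes "fort V E U" and "(V - U, T) \<in> (force_step V E)\<^sup>*"
  shows "T \<subseteq> V - U"
  using assms(2)
proof (induction rule: rtrancl_induct)
  case base
  show ?case by blast
next
  case (step T T')
  then obtain w u where T': "T' = insert w T" and uT: "u \<in> T" and forced: "nbrs V E u - T = {w}"
    unfolding force_step_def by blast
  have wV: "w \<in> V" using forced unfolding nbrs_def by blast
  have "w \<notin> U"
  proof
    assume "w \<in> U"
    then have "nbrs V E u \<inter> U = {w}" using forced step.IH by blast
    moreover have "u \<in> V - U" using uT step.IH by blast
    then have "card (nbrs V E u \<inter> U) \<noteq> 1" using assms(1) unfolding fort_def by blast
    ultimately show False by simp
  qed
  then show ?case using T' wV step.IH by blast
qed

lemma fort_complement_failed: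
  assumes "fort V E U"
  shows "failed_zero_forcing_set V E (V - U)"
  using force_steps_avoid_fort[OF assms, of V] assms
  unfolding failed_zero_forcing_set_def zero_forcing_set_def fort_def by blast

lemma failed_zf_number_ge:
  assumes "finite V" and "failed_zero_forcing_set V E S"
  shows "card S \<le> failed_zf_number V E"
proof -
  have "{card S | S. failed_zero_forcing_set V E S} \<subseteq> {..card V}"
    using card_mono[OF assms(1)] unfolding failed_zero_forcing_set_def by fastforce
  then have "finite {card S | S. failed_zero_forcing_set V E S}"
    by (rule finite_subset) simp
  then show ?thesis
    unfolding failed_zf_number_def using assms(2) by (intro Max_ge) blast+
qed

lemma vertex_connectivity_attained:
  assumes "finite V"
  shows "\<exists>X. vertex_cut V E X \<and> card X = vertex_connectivity V E"
proof -
  let ?K = "{card X | X. vertex_cut V E X}"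
  have "vertex_cut V E V" unfolding vertex_cut_def by simp
  then have "?K \<noteq> {}" by blast
  moreover have "?K \<subseteq> {..card V}"
    using card_mono[OF assms] unfolding vertex_cut_def by fastforce
  then have "finite ?K" by (rule finite_subset) simp
  ultimately have "vertex_connectivity V E \<in> ?K"
    unfolding vertex_connectivity_def by (rule Min_in[rotated])
  then show ?thesis by auto
qed

lemma disconnected_small_closed_part:
  assumes "finite W" and "W \<noteq> {}" and "\<not> connected_on W E"
    and sym: "\<And>a b. E a b \<Longrightarrow> E b a"
  shows "\<exists>C. C \<noteq> {} \<and> C \<subseteq> W \<and> 2 * card C \<le> card W \<and> (\<forall>a\<in>C. \<forall>b\<in>W. E a b \<longrightarrow> b \<in> C)"
proof -
  define R where "R = {(a, b). a \<in> W \<and> b \<in> W \<and> E a b}"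
  obtain x y where xW: "x \<in> W" and yW: "y \<in> W" and xy: "(x, y) \<notin> R\<^sup>*"
    using assms(2,3) unfolding connected_on_def R_def by blast
  define A where "A = {z \<in> W. (x, z) \<in> R\<^sup>*}"
  define B where "B = W - A"
  have closedA: "b \<in> A" if "a \<in> A" "b \<in> W" "E a b" for a b
    using that unfolding A_def R_def by (auto intro: rtrancl_into_rtrancl)
  have closedB: "b \<in> B" if "a \<in> B" "b \<in> W" "E a b" for a b
    using that closedA[of b a] sym unfolding B_def by blast
  have AW: "A \<subseteq> W" and BW: "B \<subseteq> W" unfolding A_def B_def by auto
  have "A \<noteq> {}" "B \<noteq> {}" using xW yW xy unfolding A_def B_def by auto
  have "card A + card B = card W"
    using card_Diff_subset[OF finite_subset[OF AW assms(1)] AW] card_mono[OF assms(1) AW]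
    unfolding B_def by linarith
  then show ?thesis
  proof (cases "card A \<le> card B")
    case True
    then show ?thesis using \<open>card A + card B = card W\<close> \<open>A \<noteq> {}\<close> AW closedA
      by (intro exI[of _ A]) auto
  next
    case False
    then show ?thesis using \<open>card A + card B = card W\<close> \<open>B \<noteq> {}\<close> BW closedB
      by (intro exI[of _ B]) auto
  qed
qed

lemma fort_inside_pendant_part:
  assumes sg: "simple_graph V E" and deg: "min_degree_ge V E 3"
    and C: "C \<subseteq> V - {v}" "C \<noteq> {}"
    and closed: "\<And>a. a \<in> C \<Longrightarrow> nbrs V E a \<subseteq> insert v C"
  shows "\<exists>U \<subseteq> C. fort V E U"
proof -
  have sym: "E a b \<Longrightarrow> E b a" and irr: "\<not> E a a" and inV: "E a b \<Longrightarrow> a \<in> V" for a b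
    using sg unfolding simple_graph_def by blast+
  have away: "nbrs V E u \<inter> C = {}" if "u \<notin> C" "u \<noteq> v" for u
  proof -
    have "\<not> E u a" if "a \<in> C" for a
    proof
      assume "E u a"
      then have "u \<in> nbrs V E a" using sym inV unfolding nbrs_def by blast
      then show False using closed[OF \<open>a \<in> C\<close>] \<open>u \<notin> C\<close> \<open>u \<noteq> v\<close> by blast
    qed
    then show ?thesis unfolding nbrs_def by blast
  qed
  show ?thesis
  proof (cases "card (nbrs V E v \<inter> C) = 1")
    case False
    have "card (nbrs V E u \<inter> C) \<noteq> 1" if "u \<in> V - C" for u
      using False away[of u] that by (cases "u = v") auto
    then have "fort V E C" using C unfolding fort_def by blast
    then show ?thesis by blast
  next
    case True
    then obtain w where w: "nbrs V E v \<inter> C = {w}" by (auto simp: card_1_singleton_iff)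
    then have wC: "w \<in> C" by blast
    have "3 \<le> card (nbrs V E w)" using deg wC C(1) unfolding min_degree_ge_def by blast
    moreover have "finite (nbrs V E w)" using sg unfolding simple_graph_def nbrs_def by simp
    ultimately have "2 \<le> card (nbrs V E w - {v})" by (auto simp: card_Diff_singleton_if)
    moreover have "nbrs V E w \<inter> (C - {w}) = nbrs V E w - {v}"
      using closed[OF wC] irr[of w] C(1) unfolding nbrs_def by blast
    ultimately have w_many: "2 \<le> card (nbrs V E w \<inter> (C - {w}))" by simp
    have "card (nbrs V E u \<inter> (C - {w})) \<noteq> 1" if u: "u \<in> V - (C - {w})" for u
    proof -
      consider "u = w" | "u = v" | "u \<notin> C" "u \<noteq> v" using u by blast
      then show ?thesis
      proof cases
        case 1
        then show ?thesis using w_many by simp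
      next
        case 2
        then have "nbrs V E u \<inter> (C - {w}) = {}" using w by blast
        then show ?thesis by simp
      next
        case 3
        then have "nbrs V E u \<inter> (C - {w}) = {}" using away by blast
        then show ?thesis by simp
      qed
    qed
    moreover have "C - {w} \<noteq> {}" using w_many by (metis card.empty inf_bot_right not_numeral_le_zero)
    ultimately have "fort V E (C - {w})" using C(1) unfolding fort_def by blast
    then show ?thesis by blast
  qed
qed

lemma cut_vertex_small_side:
  assumes sg: "simple_graph V E" and deg: "min_degree_ge V E 3"
    and "vertex_connectivity V E = 1"
  obtains v C where "v \<in> V" "C \<noteq> {}" "C \<subseteq> V - {v}" "2 * card C \<le> card V - 1"
    and "\<And>a. a \<in> C \<Longrightarrow> nbrs V E a \<subseteq> insert v C"
proof -
  have fin: "finite V" and sym: "\<And>a b. E a b \<Longrightarrow> E b a"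
    using sg unfolding simple_graph_def by blast+
  obtain X where "vertex_cut V E X" "card X = 1"
    using vertex_connectivity_attained[OF fin, of E] assms(3) by auto
  then obtain v where cut: "vertex_cut V E {v}" by (auto simp: card_1_singleton_iff)
  then have vV: "v \<in> V" unfolding vertex_cut_def by blast
  have "3 \<le> card (nbrs V E v)" using deg vV unfolding min_degree_ge_def by blast
  also have "\<dots> \<le> card (V - {v})"
    using sg fin unfolding nbrs_def simple_graph_def by (intro card_mono) auto
  finally have big: "3 \<le> card (V - {v})" .
  then have disconnected: "\<not> connected_on (V - {v}) E" using cut unfolding vertex_cut_def by simp
  have "0 < card (V - {v})" using big by linarith
  then have "V - {v} \<noteq> {}" using card_gt_0_iff by blast
  then obtain C where C: "C \<noteq> {}" "C \<subseteq> V - {v}" and small: "2 * card C \<le> card (V - {v})"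
    and closed: "\<forall>a\<in>C. \<forall>b\<in>V - {v}. E a b \<longrightarrow> b \<in> C"
    using disconnected_small_closed_part[OF finite_Diff[OF fin] _ disconnected sym] by blast
  have "nbrs V E a \<subseteq> insert v C" if "a \<in> C" for a
    using closed that unfolding nbrs_def by blast
  moreover have "card (V - {v}) = card V - 1" using vV fin by simp
  ultimately show thesis using that vV C small by simp
qed

theorem lemma4:
  fixes V :: "'a set" and E :: "'a \<Rightarrow> 'a \<Rightarrow> bool"
  assumes "simple_graph V E"
    and "connected_on V E"
    and "min_degree_ge V E 3"
    and "vertex_connectivity V E = 1"
  shows "failed_zf_number V E \<ge> (card V + 1) div 2"
proof -
  have fin: "finite V" using assms(1) unfolding simple_graph_def by blast
  obtain v C where vV: "v \<in> V" and C: "C \<noteq> {}" "C \<subseteq> V - {v}"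
    and small: "2 * card C \<le> card V - 1" and closed: "\<And>a. a \<in> C \<Longrightarrow> nbrs V E a \<subseteq> insert v C"
    using cut_vertex_small_side[OF assms(1,3,4)] by blast
  obtain U where UC: "U \<subseteq> C" and "fort V E U"
    using fort_inside_pendant_part[OF assms(1,3) C(2,1) closed] by blast
  have UV: "U \<subseteq> V" using UC C(2) by blast
  have "card (V - U) \<le> failed_zf_number V E"
    using failed_zf_number_ge[OF fin] fort_complement_failed \<open>fort V E U\<close> by blast
  moreover have "card (V - U) = card V - card U"
    using card_Diff_subset[OF finite_subset[OF UV fin] UV] .
  moreover have "card U \<le> card C"
    using card_mono[OF finite_subset[OF C(2) finite_Diff[OF fin]] UC] .
  moreover have "0 < card V" using vV fin card_gt_0_iff by blast
  ultimately show ?thesis using small by linarith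
qed

end
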